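(* Let $\beta>0$ be fixed. For $0<a<s$ define the (extended) Erlang C function $$C(s,a)=\left(\int_0^\infty (1+t)^s\,\frac{a t}{1+t}\,e^{-a t}\,dt\right)^{-1},$$ and let $C_*(\beta)=\left(1+\beta\,\frac{\Phi(\beta)}{\phi(\beta)}\right)^{-1}$, where $\Phi$ and $\phi$ are the distribution function and density of a standard normal random variable. Then the function $a\mapsto C(a+\beta\sqrt{a},a)$ is strictly decreasing on $(0,\infty)$. In particular, $C(a+\beta\sqrt{a},a)>C_*(\beta)$ for every $a>0$.
   Context: Note that $a<a+\beta\sqrt a$ for $a>0,\beta>0$, so $C(a+\beta\sqrt a,a)$ is well defined. It is a known result (Halfin–Whitt) that $\lim_{a\to\infty}C(a+\beta\sqrt{a},a)=C_*(\beta)$; this may be used. *)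

theory Defs
  imports "HOL-Probability.Probability"
begin

definition erlangC :: "real \<Rightarrow> real \<Rightarrow> real" where
  "erlangC s a = inverse (LBINT t:{0<..}. (1 + t) powr s * (a * t / (1 + t)) * exp (- a * t))"

definition std_normal_cdf :: "real \<Rightarrow> real" where
  "std_normal_cdf x = (LBINT y:{..x}. std_normal_density y)"

definition C_star :: "real \<Rightarrow> real" where
  "C_star \<beta> = inverse (1 + \<beta> * std_normal_cdf \<beta> / std_normal_density \<beta>)"

end

theory Submission
  imports Defs "HOL-Real_Asymp.Real_Asymp"
begin

(*
  Fix a > 0, put s = a + beta * sqrt a and substitute t = exp (z / sqrt a) - 1 in the integral
  defining erlangC s a.  The new integrand is  beta * h z - h' z  with the kernel
      h z = exp (beta * z + a * (1 + z / sqrt a - exp (z / sqrt a))),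
  which satisfies h 0 = 1 and h z \<le> exp (beta * z - z^2/2), so h vanishes at infinity.
  Hence the integral equals  1 + beta * J a  with  J a = \<integral>_0^\<infinity> h.  Writing u = z / sqrt a, the exponent of h is
  beta * z - z^2 * (exp u - 1 - u) / u^2, and (exp u - 1 - u) / u^2 is increasing in u > 0,
  so h is pointwise strictly increasing in a; thus J is strictly increasing and erlangC
  strictly decreasing.  Finally J a < J (a + 1) \<le> \<integral>_0^\<infinity> exp (beta * z - z^2/2), and the latter
  is the Mills ratio std_normal_cdf beta / std_normal_density beta, which gives erlangC > C_star.
*)

section \<open>Gaussian integrals and the Mills ratio\<close>

lemma gaussian_integrable: "integrable lborel (\<lambda>z::real. exp (c * z - z^2 / 2))"
proof -
  have "integrable lborel (\<lambda>z. (exp (c^2 / 2) * sqrt (2 * pi)) * normal_density c 1 z)"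
    by (intro integrable_mult_right integrable_normal_density) auto
  moreover have "(exp (c^2 / 2) * sqrt (2 * pi)) * normal_density c 1 z = exp (c * z - z^2 / 2)" for z
  proof -
    have "exp (c^2 / 2) * exp (- (z - c)\<^sup>2 / 2) = exp (c * z - z^2 / 2)"
      by (simp add: exp_add[symmetric] power2_eq_square algebra_simps diff_divide_distrib add_divide_distrib)
    then show ?thesis by (simp add: normal_density_def)
  qed
  ultimately show ?thesis by simp
qed

lemma gaussian_set_integrable:
  "A \<in> sets lborel \<Longrightarrow> set_integrable lborel A (\<lambda>z::real. exp (c * z - z^2 / 2))"
  unfolding set_integrable_def by (intro integrable_mult_indicator gaussian_integrable)

text \<open>The Mills-ratio representation: reflect at \<open>b\<close> and complete the square.\<close>

lemma std_normal_cdf_eq: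
  "std_normal_cdf b = std_normal_density b * (LBINT z:{0<..}. exp (b * z - z^2 / 2))"
proof -
  have "std_normal_cdf b = (\<integral>y. indicator {..b} y *\<^sub>R std_normal_density y \<partial>lborel)"
    by (simp add: std_normal_cdf_def set_lebesgue_integral_def)
  also have "\<dots> = \<bar>-1\<bar> *\<^sub>R (\<integral>z. indicator {..b} (b + -1 * z) *\<^sub>R std_normal_density (b + -1 * z) \<partial>lborel)"
    by (rule lborel_integral_real_affine) simp
  also have "\<dots> = (\<integral>z. indicator {..b} (b - z) * std_normal_density (b - z) \<partial>lborel)"
    by simp
  also have "\<dots> = (\<integral>z. std_normal_density b * (indicator {0<..} z * exp (b * z - z^2 / 2)) \<partial>lborel)"
  proof (rule integral_cong_AE)
    show "AE z in lborel. indicator {..b} (b - z) * std_normal_density (b - z)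
        = std_normal_density b * (indicator {0<..} z * exp (b * z - z\<^sup>2 / 2))"
      using AE_lborel_singleton[of 0]
    proof eventually_elim
      case (elim z)
      have "exp (- (b - z)\<^sup>2 / 2) = exp (- b\<^sup>2 / 2) * exp (b * z - z\<^sup>2 / 2)"
        by (simp add: exp_add[symmetric] power2_eq_square algebra_simps diff_divide_distrib add_divide_distrib)
      then show ?case using elim by (auto simp: indicator_def std_normal_density_def)
    qed
  qed auto
  also have "\<dots> = std_normal_density b * (LBINT z:{0<..}. exp (b * z - z^2 / 2))"
    by (simp add: set_lebesgue_integral_def)
  finally show ?thesis .
qed

lemma C_star_eq: "C_star \<beta> = inverse (1 + \<beta> * (LBINT z:{0<..}. exp (\<beta> * z - z^2 / 2)))"
proof -
  have "std_normal_density \<beta> > 0" by (simp add: std_normal_density_def)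
  then show ?thesis unfolding C_star_def std_normal_cdf_eq by simp
qed

lemma set_integral_strict_mono:
  fixes f g :: "real \<Rightarrow> real"
  assumes S: "S \<in> sets lborel" "emeasure lborel S \<noteq> 0"
    and int: "set_integrable lborel S f" "set_integrable lborel S g"
    and less: "\<And>x. x \<in> S \<Longrightarrow> f x < g x"
  shows "(LBINT x:S. f x) < (LBINT x:S. g x)"
proof -
  define D where "D x = indicator S x * (g x - f x)" for x
  have int_D: "integrable lborel D"
    using set_integral_diff(1)[OF int(2,1)] unfolding D_def set_integrable_def by (simp add: algebra_simps)
  have D_nonneg: "0 \<le> D x" for x
    using less[of x] unfolding D_def by (auto simp: indicator_def less_imp_le)
  have gap: "(LBINT x:S. g x) - (LBINT x:S. f x) = integral\<^sup>L lborel D"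
    using set_integral_diff(2)[OF int(2,1)] unfolding D_def set_lebesgue_integral_def
    by (simp add: algebra_simps)
  have "integral\<^sup>L lborel D \<noteq> 0"
  proof
    assume "integral\<^sup>L lborel D = 0"
    then have "AE x in lborel. D x = 0"
      using integral_nonneg_eq_0_iff_AE[OF int_D] D_nonneg by auto
    then have "AE x in lborel. x \<notin> S"
      by (rule eventually_mono) (use less in \<open>force simp: D_def indicator_def split: if_splits\<close>)
    then show False
      using S by (subst (asm) AE_iff_measurable[where N=S]) auto
  qed
  moreover have "integral\<^sup>L lborel D \<ge> 0"
    using D_nonneg by (intro integral_nonneg_AE) auto
  ultimately show ?thesis using gap by linarith
qed

section \<open>Monotonicity of the exponent\<close>

text \<open>\<open>q w = (w - 2) e\<^sup>w + w + 2\<close> vanishes with its first derivative at \<open>0\<close> and has second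
  derivative \<open>w e\<^sup>w\<close>; it is the numerator of the derivative of \<open>(e\<^sup>w - 1 - w) / w\<^sup>2\<close>.\<close>

lemma exp_taylor_numerator_pos:
  assumes "(w::real) > 0"
  shows "(w - 2) * exp w + w + 2 > 0"
proof -
  have slope_pos: "(x - 1) * exp x + 1 > 0" if "x > 0" for x :: real
  proof -
    have "(\<lambda>x. (x - 1) * exp x + 1) 0 < (\<lambda>x. (x - 1) * exp x + 1) x"
    proof (rule DERIV_pos_imp_increasing_open[OF that])
      fix y :: real assume "0 < y" "y < x"
      then have "DERIV (\<lambda>x. (x - 1) * exp x + 1) y :> y * exp y \<and> y * exp y > 0"
        by (auto intro!: derivative_eq_intros simp: algebra_simps)
      then show "\<exists>l. DERIV (\<lambda>x. (x - 1) * exp x + 1) y :> l \<and> 0 < l" by blast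
    qed (intro continuous_intros)
    then show ?thesis by simp
  qed
  have "(\<lambda>w. (w - 2) * exp w + w + 2) 0 < (\<lambda>w. (w - 2) * exp w + w + 2) w"
  proof (rule DERIV_pos_imp_increasing_open[OF assms])
    fix x :: real assume "0 < x" "x < w"
    then have "DERIV (\<lambda>w. (w - 2) * exp w + w + 2) x :> (x - 1) * exp x + 1 \<and> (x - 1) * exp x + 1 > 0"
      using slope_pos by (auto intro!: derivative_eq_intros simp: algebra_simps)
    then show "\<exists>l. DERIV (\<lambda>w. (w - 2) * exp w + w + 2) x :> l \<and> 0 < l" by blast
  qed (intro continuous_intros)
  then show ?thesis by simp
qed

definition exp_remainder :: "real \<Rightarrow> real" where
  "exp_remainder w = (exp w - 1 - w) / w^2"

lemma exp_remainder_strict_mono: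
  assumes "0 < v" "v < w"
  shows "exp_remainder v < exp_remainder w"
proof (rule DERIV_pos_imp_increasing[OF assms(2)])
  fix x assume "v \<le> x" "x \<le> w"
  then have x: "x > 0" using assms by auto
  have "DERIV exp_remainder x :>
      ((exp x - 0 - 1) * x^2 - (exp x - 1 - x) * (of_nat 2 * x ^ (2 - 1) * 1)) / (x^2 * x^2)"
    unfolding exp_remainder_def[abs_def] using x by (auto intro!: derivative_eq_intros)
  moreover have "((exp x - 0 - 1) * x^2 - (exp x - 1 - x) * (of_nat 2 * x ^ (2 - 1) * 1)) / (x^2 * x^2)
      = ((x - 2) * exp x + x + 2) / x^3"
    using x by (simp add: field_simps power2_eq_square power3_eq_cube)
  moreover have "((x - 2) * exp x + x + 2) / x^3 > 0"
    using exp_taylor_numerator_pos[OF x] x by simp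
  ultimately show "\<exists>l. DERIV exp_remainder x :> l \<and> 0 < l" by auto
qed

text \<open>Since \<open>a (1 + u - e\<^sup>u) = - z\<^sup>2 exp_remainder u\<close> for \<open>u = z / \<surd>a\<close>, the exponent of the
  kernel below is strictly increasing in the load \<open>a\<close>.\<close>

lemma load_exponent_strict_mono:
  fixes a b z :: real
  assumes "0 < a" "a < b" "0 < z"
  shows "a * (1 + z / sqrt a - exp (z / sqrt a)) < b * (1 + z / sqrt b - exp (z / sqrt b))"
proof -
  have as_remainder: "c * (1 + z / sqrt c - exp (z / sqrt c)) = - (z^2) * exp_remainder (z / sqrt c)"
    if "c > 0" for c
    using that assms by (simp add: exp_remainder_def field_simps power2_eq_square)
  have "z / sqrt b < z / sqrt a"
    using assms by (intro divide_strict_left_mono) auto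
  then have "exp_remainder (z / sqrt b) < exp_remainder (z / sqrt a)"
    using assms by (intro exp_remainder_strict_mono) auto
  then show ?thesis
    using assms by (simp add: as_remainder)
qed

section \<open>The kernel of the substituted Erlang integral\<close>

definition erlang_integrand :: "real \<Rightarrow> real \<Rightarrow> real \<Rightarrow> real" where
  "erlang_integrand s a t = (1 + t) powr s * (a * t / (1 + t)) * exp (- a * t)"

lemma erlangC_eq_integrand: "erlangC s a = inverse (LBINT t:{0<..}. erlang_integrand s a t)"
  unfolding erlangC_def erlang_integrand_def ..

definition erlang_kernel :: "real \<Rightarrow> real \<Rightarrow> real \<Rightarrow> real" where
  "erlang_kernel a \<beta> z = exp (\<beta> * z + a * (1 + z / sqrt a - exp (z / sqrt a)))"

lemma erlang_kernel_pos: "erlang_kernel a \<beta> z > 0"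
  unfolding erlang_kernel_def by simp

lemma erlang_kernel_strict_mono:
  "0 < a \<Longrightarrow> a < b \<Longrightarrow> 0 < z \<Longrightarrow> erlang_kernel a \<beta> z < erlang_kernel b \<beta> z"
  unfolding erlang_kernel_def using load_exponent_strict_mono by simp

context
  fixes a \<beta> :: real
  assumes a_pos: "a > 0"
begin

lemma sqrt_load: "sqrt a > 0" "sqrt a * sqrt a = a" "a / sqrt a = sqrt a"
  using a_pos by (auto simp: real_div_sqrt)

text \<open>Gaussian domination, from \<open>e\<^sup>u \<ge> 1 + u + u\<^sup>2/2\<close> for \<open>u \<ge> 0\<close>.\<close>

lemma erlang_kernel_le_gaussian: "z \<ge> 0 \<Longrightarrow> erlang_kernel a \<beta> z \<le> exp (\<beta> * z - z^2 / 2)"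
proof -
  assume z: "z \<ge> 0"
  have "1 + z / sqrt a + (z / sqrt a)^2 / 2 \<le> exp (z / sqrt a)"
    using z sqrt_load by (intro exp_lower_Taylor_quadratic) auto
  then have "a * (1 + z / sqrt a - exp (z / sqrt a)) \<le> a * (- ((z / sqrt a)^2) / 2)"
    using a_pos by (intro mult_left_mono) auto
  also have "\<dots> = - (z^2) / 2"
    using sqrt_load by (simp add: power_divide)
  finally show ?thesis unfolding erlang_kernel_def by simp
qed

lemma erlang_kernel_continuous: "continuous_on S (erlang_kernel a \<beta>)"
  unfolding erlang_kernel_def by (intro continuous_intros) (use sqrt_load in auto)

lemma erlang_kernel_measurable[measurable]: "erlang_kernel a \<beta> \<in> borel_measurable borel"
  by (intro borel_measurable_continuous_onI erlang_kernel_continuous)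

lemma erlang_kernel_integrable: "set_integrable lborel {0<..} (erlang_kernel a \<beta>)"
proof (rule set_integrable_bound[OF gaussian_set_integrable[of "{0<..}" \<beta>]])
  show "set_borel_measurable lborel {0<..} (erlang_kernel a \<beta>)"
    unfolding set_borel_measurable_def by measurable
  show "AE z in lborel. z \<in> {0<..} \<longrightarrow> norm (erlang_kernel a \<beta> z) \<le> norm (exp (\<beta> * z - z\<^sup>2 / 2))"
    using erlang_kernel_le_gaussian less_imp_le[OF erlang_kernel_pos] by auto
qed auto

text \<open>The substituted Erlang integrand, \<open>\<surd>a (e\<^sup>u - 1) h z\<close> with \<open>u = z / \<surd>a\<close>; it is dominated by
  a Gaussian as well.\<close>

definition weighted_kernel :: "real \<Rightarrow> real" where
  "weighted_kernel z = sqrt a * (exp (z / sqrt a) - 1) * erlang_kernel a \<beta> z"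

lemma weighted_kernel_integrable: "set_integrable lborel {0<..} weighted_kernel"
proof (rule set_integrable_bound[OF set_integrable_mult_right[OF
      gaussian_set_integrable[of "{0<..}" "\<beta> + 1 / sqrt a"]]])
  show "set_borel_measurable lborel {0<..} weighted_kernel"
    unfolding set_borel_measurable_def weighted_kernel_def by measurable
  show "AE z in lborel. z \<in> {0<..} \<longrightarrow>
      norm (weighted_kernel z) \<le> norm (sqrt a * exp ((\<beta> + 1 / sqrt a) * z - z\<^sup>2 / 2))"
  proof (intro AE_I2 impI)
    fix z :: real assume z: "z \<in> {0<..}"
    have "0 \<le> weighted_kernel z"
      unfolding weighted_kernel_def
      using z sqrt_load less_imp_le[OF erlang_kernel_pos] by (intro mult_nonneg_nonneg) auto
    moreover have "weighted_kernel z \<le> sqrt a * (exp (z / sqrt a) * exp (\<beta> * z - z^2 / 2))"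
      unfolding weighted_kernel_def mult.assoc[symmetric]
      using z sqrt_load less_imp_le[OF erlang_kernel_pos] erlang_kernel_le_gaussian[of z]
      by (intro mult_mono) auto
    moreover have "exp (z / sqrt a) * exp (\<beta> * z - z^2 / 2) = exp ((\<beta> + 1 / sqrt a) * z - z\<^sup>2 / 2)"
      by (simp add: exp_add[symmetric] algebra_simps)
    ultimately show "norm (weighted_kernel z) \<le> norm (sqrt a * exp ((\<beta> + 1 / sqrt a) * z - z\<^sup>2 / 2))"
      using sqrt_load by simp
  qed
qed auto

lemma erlang_kernel_deriv:
  "(erlang_kernel a \<beta> has_real_derivative (\<beta> * erlang_kernel a \<beta> z - weighted_kernel z)) (at z)"
  unfolding erlang_kernel_def[abs_def] weighted_kernel_def using sqrt_load
  by (auto intro!: derivative_eq_intros simp: algebra_simps)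

text \<open>By the fundamental theorem of calculus, since \<open>h 0 = 1\<close> and \<open>h\<close> vanishes at infinity.\<close>

lemma erlang_kernel_deriv_integral:
  "(LBINT z:{0<..}. \<beta> * erlang_kernel a \<beta> z - weighted_kernel z) = -1"
proof -
  let ?h = "erlang_kernel a \<beta>"
  have "(LBINT z=ereal 0..\<infinity>. \<beta> * ?h z - weighted_kernel z) = 0 - 1"
  proof (rule interval_integral_FTC_integrable[where F = ?h])
    show "(?h has_vector_derivative \<beta> * ?h x - weighted_kernel x) (at x)" for x
      using erlang_kernel_deriv by (simp add: has_real_derivative_iff_has_vector_derivative)
    show "isCont (\<lambda>z. \<beta> * ?h z - weighted_kernel z) x" for x
      unfolding weighted_kernel_def erlang_kernel_def by (intro continuous_intros) (use sqrt_load in auto)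
    show "set_integrable lborel (einterval (ereal 0) \<infinity>) (\<lambda>z. \<beta> * ?h z - weighted_kernel z)"
      using erlang_kernel_integrable weighted_kernel_integrable
      by (simp add: set_integral_diff set_integrable_mult_right)
    have "(?h \<longlongrightarrow> ?h 0) (at_right 0)"
      using erlang_kernel_continuous[of UNIV]
      by (intro tendsto_within_subset[OF isCont_def[THEN iffD1]]) (auto simp: continuous_on_eq_continuous_at)
    then show "((?h \<circ> real_of_ereal) \<longlongrightarrow> 1) (at_right (ereal 0))"
      by (simp add: ereal_tendsto_simps erlang_kernel_def)
    have "((\<lambda>z. exp (\<beta> * z - z^2 / 2)) \<longlongrightarrow> 0) at_top" by real_asymp
    then have "(?h \<longlongrightarrow> 0) at_top"
    proof (rule tendsto_sandwich[rotated 3])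
      show "\<forall>\<^sub>F z in at_top. 0 \<le> ?h z" by (simp add: less_imp_le[OF erlang_kernel_pos])
      show "\<forall>\<^sub>F z in at_top. ?h z \<le> exp (\<beta> * z - z^2 / 2)"
        using eventually_ge_at_top[of 0] by eventually_elim (rule erlang_kernel_le_gaussian)
    qed auto
    then show "((?h \<circ> real_of_ereal) \<longlongrightarrow> 0) (at_left \<infinity>)"
      by (simp add: ereal_tendsto_simps)
  qed simp
  then show ?thesis by (simp add: interval_integral_to_infinity_eq)
qed

lemma erlang_integrand_substituted:
  "erlang_integrand (a + \<beta> * sqrt a) a (exp (z / sqrt a) - 1) * (exp (z / sqrt a) / sqrt a)
    = weighted_kernel z"
proof -
  define w where "w = z / sqrt a"
  have "(a + \<beta> * sqrt a) * w = a * w + \<beta> * z"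
    using sqrt_load unfolding w_def by (simp add: field_simps)
  then have power: "exp w powr (a + \<beta> * sqrt a) = exp (a * w + \<beta> * z)"
    by (simp add: powr_def mult.commute)
  have "erlang_integrand (a + \<beta> * sqrt a) a (exp w - 1) * (exp w / sqrt a)
      = (a / sqrt a) * (exp w - 1) * (exp (a * w + \<beta> * z) * exp (- a * (exp w - 1)))"
    unfolding erlang_integrand_def power[symmetric] using sqrt_load by (simp add: field_simps)
  also have "exp (a * w + \<beta> * z) * exp (- a * (exp w - 1)) = exp (\<beta> * z + a * (1 + w - exp w))"
    by (simp add: exp_add[symmetric] algebra_simps)
  finally show ?thesis
    unfolding weighted_kernel_def erlang_kernel_def w_def[symmetric] sqrt_load(3) by simp
qed

lemma erlang_integral_substitution:
  "(LBINT t:{0<..}. erlang_integrand (a + \<beta> * sqrt a) a t) = (LBINT z:{0<..}. weighted_kernel z)"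
proof -
  let ?f = "erlang_integrand (a + \<beta> * sqrt a) a"
  have pos: "exp (x / sqrt a) - 1 > 0" if "ereal 0 < ereal x" for x
    using that sqrt_load by simp
  have "(LBINT t=ereal 0..\<infinity>. ?f t)
      = (LBINT z=ereal 0..\<infinity>. ?f (exp (z / sqrt a) - 1) * (exp (z / sqrt a) / sqrt a))"
  proof (rule interval_integral_substitution_nonneg(2))
    show "DERIV (\<lambda>z. exp (z / sqrt a) - 1) x :> exp (x / sqrt a) / sqrt a" for x
    proof -
      have "DERIV (\<lambda>z. exp (z / sqrt a) - 1) x :> exp (x / sqrt a) * (1 / sqrt a) - 0"
        by (intro derivative_intros) (rule DERIV_cdivide[OF DERIV_ident])
      then show ?thesis by simp
    qed
    show "isCont ?f (exp (x / sqrt a) - 1)" if "ereal 0 < ereal x" for x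
      using pos[OF that] unfolding erlang_integrand_def[abs_def] by (intro continuous_intros) auto
    show "isCont (\<lambda>x. exp (x / sqrt a) / sqrt a) x" for x
      by (intro continuous_intros) (use sqrt_load in auto)
    show "0 \<le> ?f (exp (x / sqrt a) - 1)" if "ereal 0 < ereal x" for x
      using pos[OF that] a_pos unfolding erlang_integrand_def
      by (intro mult_nonneg_nonneg divide_nonneg_nonneg) auto
    show "0 \<le> exp (x / sqrt a) / sqrt a" for x
      using sqrt_load by simp
    have "((\<lambda>z. exp (z / sqrt a) - 1) \<longlongrightarrow> exp (0 / sqrt a) - 1) (at_right 0)"
      by (intro tendsto_intros) (use sqrt_load in auto)
    then show "((ereal \<circ> (\<lambda>z. exp (z / sqrt a) - 1) \<circ> real_of_ereal) \<longlongrightarrow> ereal 0) (at_right (ereal 0))"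
      by (simp add: ereal_tendsto_simps)
    have "filterlim (\<lambda>z. exp (z / sqrt a) - 1) at_top at_top"
      using sqrt_load by real_asymp
    then show "((ereal \<circ> (\<lambda>z. exp (z / sqrt a) - 1) \<circ> real_of_ereal) \<longlongrightarrow> \<infinity>) (at_left \<infinity>)"
      by (simp add: ereal_tendsto_simps)
    show "set_integrable lborel (einterval (ereal 0) \<infinity>)
        (\<lambda>x. ?f (exp (x / sqrt a) - 1) * (exp (x / sqrt a) / sqrt a))"
      using weighted_kernel_integrable by (simp only: einterval_eq_Ici erlang_integrand_substituted)
  qed simp
  then show ?thesis
    by (simp only: interval_integral_to_infinity_eq erlang_integrand_substituted)
qed

lemma erlangC_kernel_form:
  "erlangC (a + \<beta> * sqrt a) a = inverse (1 + \<beta> * (LBINT z:{0<..}. erlang_kernel a \<beta> z))"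
proof -
  have "(LBINT z:{0<..}. weighted_kernel z)
      = (LBINT z:{0<..}. \<beta> * erlang_kernel a \<beta> z - (\<beta> * erlang_kernel a \<beta> z - weighted_kernel z))"
    by simp
  also have "\<dots> = \<beta> * (LBINT z:{0<..}. erlang_kernel a \<beta> z) + 1"
    using erlang_kernel_integrable weighted_kernel_integrable erlang_kernel_deriv_integral
    by (simp add: set_integral_diff set_integral_mult_right set_integrable_mult_right)
  finally show ?thesis
    by (simp add: erlangC_eq_integrand erlang_integral_substitution)
qed

lemma erlang_kernel_integral_nonneg: "0 \<le> (LBINT z:{0<..}. erlang_kernel a \<beta> z)"
  using erlang_kernel_pos unfolding set_lebesgue_integral_def
  by (intro integral_nonneg_AE AE_I2) (auto simp: indicator_def less_imp_le)

lemma erlang_kernel_integral_le_gaussian: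
  "(LBINT z:{0<..}. erlang_kernel a \<beta> z) \<le> (LBINT z:{0<..}. exp (\<beta> * z - z^2 / 2))"
  using erlang_kernel_integrable gaussian_set_integrable[of "{0<..}" \<beta>] erlang_kernel_le_gaussian
  by (intro set_integral_mono) auto

end

lemma erlang_kernel_integral_strict_mono:
  assumes "0 < a" "a < b"
  shows "(LBINT z:{0<..}. erlang_kernel a \<beta> z) < (LBINT z:{0<..}. erlang_kernel b \<beta> z)"
proof (rule set_integral_strict_mono)
  have "emeasure lborel {0::real<..1} \<le> emeasure lborel {0::real<..}"
    by (intro emeasure_mono) auto
  then show "emeasure lborel {0::real<..} \<noteq> 0" by auto
  show "set_integrable lborel {0<..} (erlang_kernel a \<beta>)" "set_integrable lborel {0<..} (erlang_kernel b \<beta>)"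
    using assms by (auto intro: erlang_kernel_integrable)
qed (use assms erlang_kernel_strict_mono in auto)

theorem mainTheorem1:
  fixes \<beta> :: real
  assumes "\<beta> > 0"
  shows "strict_antimono_on {0<..} (\<lambda>a. erlangC (a + \<beta> * sqrt a) a)
         \<and> (\<forall>a>0. erlangC (a + \<beta> * sqrt a) a > C_star \<beta>)"
proof -
  let ?J = "\<lambda>a. LBINT z:{0<..}. erlang_kernel a \<beta> z"
  have smaller: "inverse (1 + \<beta> * y) < erlangC (a + \<beta> * sqrt a) a" if "a > 0" "?J a < y" for a y
  proof -
    have "0 < 1 + \<beta> * ?J a"
      using erlang_kernel_integral_nonneg[OF \<open>a > 0\<close>] assms by (intro add_pos_nonneg) auto
    moreover have "1 + \<beta> * ?J a < 1 + \<beta> * y" using that assms by simp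
    ultimately show ?thesis by (simp add: erlangC_kernel_form[OF \<open>a > 0\<close>] less_imp_inverse_less)
  qed
  have "strict_antimono_on {0<..} (\<lambda>a. erlangC (a + \<beta> * sqrt a) a)"
    unfolding monotone_on_def
    using smaller erlang_kernel_integral_strict_mono erlangC_kernel_form by auto
  moreover have "erlangC (a + \<beta> * sqrt a) a > C_star \<beta>" if "a > 0" for a
  proof -
    have "?J a < ?J (a + 1)"
      using that by (intro erlang_kernel_integral_strict_mono) auto
    also have "\<dots> \<le> (LBINT z:{0<..}. exp (\<beta> * z - z^2 / 2))"
      using that by (intro erlang_kernel_integral_le_gaussian) auto
    finally show ?thesis
      using smaller[OF that] by (simp add: C_star_eq)
  qed
  ultimately show ?thesis by blast
qed

end
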